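(* Let $k\ge 1$ and $1\le k^*\le k$ be integers. For $r\in\{1,2\}$, run the Reduce-By-Median-Counter algorithm (defined in the context) with parameters $k,k^*$ on a weighted stream $\sigma_r$ of weighted length $N_r$, producing summary $S_r$. Let $\sigma=\sigma_1\circ\sigma_2$ be the concatenated stream, $N=N_1+N_2$, and $f_i$ the frequency of item $i$ in $\sigma$. Apply the merge procedure: for each item $i$ assigned a counter $c_2(i)$ in $S_2$ (in any order), call Update$(i,c_2(i))$ on $S_1$. Let $C$ be the sum of the counter values of the resulting summary and $\hat f_i$ its output of Estimate$(i)$. Then for every $i\in[m]$, $$0\le f_i-\hat f_i\le\frac{N-C}{k^*},$$ and moreover for every integer $0\le j<k^*$, $$0\le f_i-\hat f_i\le\frac{N^{\mathrm{res}(j)}}{k^*-j},$$ where $N^{\mathrm{res}(j)}$ is computed for $\sigma$.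
   Context: A weighted stream over the universe $[m]=\{1,\dots,m\}$ is a sequence of updates $(i_t,\Delta_t)$ with $i_t\in[m]$ and real weights $\Delta_t>0$; its weighted length is $\sum_t\Delta_t$. The frequency of $i$ in a stream is the sum of $\Delta_t$ over updates with $i_t=i$. $N^{\mathrm{res}(j)}$ denotes the sum of the frequencies of all items except the $j$ items of largest frequency (ties broken arbitrarily). The Reduce-By-Median-Counter algorithm with integer parameters $k\ge 1$ and $1\le k^*\le k$ maintains a set $T\subseteq[m]$ of at most $k$ items, each $j\in T$ carrying a nonnegative real counter $c(j)$; initially $T=\emptyset$. Update$(i,\Delta)$: if $i\in T$, set $c(i)\gets c(i)+\Delta$; else if $|T|<k$, add $i$ to $T$ with $c(i)=\Delta$; else call DecrementCounters(), and afterwards, if $\Delta\ge c_{k^*}$, add $i$ to $T$ with $c(i)=\Delta-c_{k^*}$. DecrementCounters(): let $c_{k^*}$ be the $k^*$-th largest value, counting multiplicity, of the multiset $\{c(j): j\in T\}$; for every $j\in T$ set $c(j)\gets c(j)-c_{k^*}$, and remove $j$ from $T$ if now $c(j)\le 0$. Estimate$(i)$ returns $c(i)$ if $i\in T$ and $0$ otherwise. *)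

theory Defs
  imports Complex_Main "HOL-Library.Multiset"
begin

text \<open>A summary is a pair (T, c): the set T of monitored items and the counter
function c (only its values on T are meaningful).\<close>

type_synonym summary = "nat set \<times> (nat \<Rightarrow> real)"

type_synonym wstream = "(nat \<times> real) list"

definition empty_summary :: summary where
  "empty_summary = ({}, (\<lambda>_. 0))"

definition kth_largest :: "nat set \<Rightarrow> (nat \<Rightarrow> real) \<Rightarrow> nat \<Rightarrow> real" where
  "kth_largest T c ks = rev (sorted_list_of_multiset (image_mset c (mset_set T))) ! (ks - 1)"

definition decrement_counters :: "nat \<Rightarrow> summary \<Rightarrow> summary" where
  "decrement_counters ks S = (let (T, c) = S; ck = kth_largest T c ks in
      ({j \<in> T. c j - ck > 0}, (\<lambda>j. c j - ck)))"

definition rbmc_update :: "nat \<Rightarrow> nat \<Rightarrow> summary \<Rightarrow> nat \<times> real \<Rightarrow> summary" where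
  "rbmc_update k ks S u = (let (T, c) = S; (i, \<Delta>) = u in
     if i \<in> T then (T, c(i := c i + \<Delta>))
     else if card T < k then (insert i T, c(i := \<Delta>))
     else (let ck = kth_largest T c ks; (T', c') = decrement_counters ks (T, c) in
           if \<Delta> \<ge> ck then (insert i T', c'(i := \<Delta> - ck)) else (T', c')))"

definition rbmc_run :: "nat \<Rightarrow> nat \<Rightarrow> summary \<Rightarrow> wstream \<Rightarrow> summary" where
  "rbmc_run k ks S \<sigma> = foldl (rbmc_update k ks) S \<sigma>"

definition rbmc_estimate :: "summary \<Rightarrow> nat \<Rightarrow> real" where
  "rbmc_estimate S i = (if i \<in> fst S then snd S i else 0)"

definition counter_sum :: "summary \<Rightarrow> real" where
  "counter_sum S = (\<Sum>j\<in>fst S. snd S j)"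

definition rbmc_merge :: "nat \<Rightarrow> nat \<Rightarrow> summary \<Rightarrow> summary \<Rightarrow> nat list \<Rightarrow> summary" where
  "rbmc_merge k ks S1 S2 xs = foldl (rbmc_update k ks) S1 (map (\<lambda>i. (i, snd S2 i)) xs)"

definition valid_stream :: "nat \<Rightarrow> wstream \<Rightarrow> bool" where
  "valid_stream m \<sigma> \<longleftrightarrow> (\<forall>(i, \<Delta>) \<in> set \<sigma>. i \<in> {1..m} \<and> \<Delta> > 0)"

definition weighted_length :: "wstream \<Rightarrow> real" where
  "weighted_length \<sigma> = sum_list (map snd \<sigma>)"

definition freq :: "wstream \<Rightarrow> nat \<Rightarrow> real" where
  "freq \<sigma> i = sum_list (map snd (filter (\<lambda>u. fst u = i) \<sigma>))"

definition N_res :: "nat \<Rightarrow> wstream \<Rightarrow> nat \<Rightarrow> real" where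
  "N_res m \<sigma> j = sum_list (drop j (rev (sort (map (freq \<sigma>) [1..<m+1]))))"

end

theory Submission
  imports Defs
begin

text \<open>Each update either adds its weight to one counter, which loses nothing, or performs a
decrement of size \<open>d = c_k*\<close>. A decrement lowers every estimate by at most \<open>d\<close>, and since at
least \<open>k*\<close> counters are \<open>\<ge> d\<close> it removes at least \<open>k* d\<close> of counter mass. The merge replays
the counters of the second summary as a stream whose frequencies are exactly its estimates. So if
\<open>D\<close> is the total size of all decrements in both runs and in the merge, every estimate lies in
\<open>[f_i - D, f_i]\<close> and \<open>k* D \<le> N - C\<close>. For the residual bound, the \<open>j\<close> largest frequencies
sum to at most \<open>j D + \<Sum>_i max 0 (f_i - D)\<close>, and the last sum is at most the sum of the estimates,
hence at most \<open>C\<close>; thus \<open>N - N^res(j) \<le> j D + N - k* D\<close>.\<close>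

lemma length_kth_largest_list:
  "length (rev (sorted_list_of_multiset (image_mset c (mset_set T)))) = card T"
  by (metis length_rev mset_sorted_list_of_multiset size_image_mset size_mset size_mset_set)

lemma kth_largest_in_image:
  assumes "finite T" and "1 \<le> ks" and "ks \<le> card T"
  shows "\<exists>t\<in>T. c t = kth_largest T c ks"
proof -
  define L where "L = rev (sorted_list_of_multiset (image_mset c (mset_set T)))"
  have "L ! (ks - 1) \<in> set L"
    using length_kth_largest_list[of c T] assms unfolding L_def by (intro nth_mem) linarith
  moreover have "set L = c ` T" unfolding L_def using assms(1) by simp
  ultimately show ?thesis by (auto simp: kth_largest_def L_def)
qed

lemma kth_largest_card_ge:
  assumes "finite T" and "1 \<le> ks" and "ks \<le> card T"
  shows "ks \<le> card {t\<in>T. kth_largest T c ks \<le> c t}"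
proof -
  define L where "L = rev (sorted_list_of_multiset (image_mset c (mset_set T)))"
  define v where "v = L ! (ks - 1)"
  have len: "length L = card T" using length_kth_largest_list by (simp add: L_def)
  have sorted: "sorted (rev L)" by (simp add: L_def)
  have top_ge: "\<forall>w\<in>set (take ks L). v \<le> w"
  proof
    fix w assume "w \<in> set (take ks L)"
    then obtain n where n: "n < ks" "n < length L" "w = L ! n" by (auto simp: in_set_conv_nth)
    have "rev L ! (length L - 1 - (ks - 1)) \<le> rev L ! (length L - 1 - n)"
      using sorted n assms len by (intro sorted_nth_mono) auto
    then show "v \<le> w" using n assms len by (simp add: rev_nth v_def)
  qed
  have "ks = length (filter (\<lambda>w. v \<le> w) (take ks L))"
    using top_ge assms len by simp
  also have "\<dots> \<le> length (filter (\<lambda>w. v \<le> w) L)"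
    by (metis append_take_drop_id filter_append length_append le_add1)
  also have "\<dots> = size (filter_mset (\<lambda>w. v \<le> w) (image_mset c (mset_set T)))"
    by (metis L_def mset_filter size_mset mset_rev mset_sorted_list_of_multiset)
  also have "\<dots> = card {t\<in>T. v \<le> c t}"
    using assms(1) by (simp add: filter_mset_image_mset)
  finally show ?thesis by (simp add: v_def L_def kth_largest_def)
qed

lemma sum_truncation_ge:
  fixes c :: "'a \<Rightarrow> real"
  assumes "finite T" and "\<forall>j\<in>T. 0 \<le> c j" and "0 \<le> d" and "ks \<le> card {j\<in>T. d \<le> c j}"
  shows "real ks * d \<le> (\<Sum>j\<in>T. c j) - (\<Sum>j\<in>{j\<in>T. d < c j}. c j - d)"
proof -
  have "real ks * d \<le> real (card {j\<in>T. d \<le> c j}) * d"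
    using assms(3,4) by (intro mult_right_mono) auto
  also have "\<dots> = (\<Sum>j\<in>{j\<in>T. d \<le> c j}. min (c j) d)" by simp
  also have "\<dots> \<le> (\<Sum>j\<in>T. min (c j) d)"
    using assms(1-3) by (intro sum_mono2) auto
  also have "\<dots> = (\<Sum>j\<in>T. c j) - (\<Sum>j\<in>T. if d < c j then c j - d else 0)"
    unfolding sum_subtractf[symmetric] by (intro sum.cong) auto
  also have "(\<Sum>j\<in>T. if d < c j then c j - d else 0) = (\<Sum>j\<in>{j\<in>T. d < c j}. c j - d)"
    using assms(1) by (simp add: sum.inter_filter)
  finally show ?thesis .
qed

definition wf_summary :: "nat \<Rightarrow> summary \<Rightarrow> bool" where
  "wf_summary k S \<longleftrightarrow> finite (fst S) \<and> card (fst S) \<le> k \<and> (\<forall>j\<in>fst S. 0 \<le> snd S j)"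

lemma rbmc_update_decrement:
  assumes wf: "wf_summary k (T, c)" and "i \<notin> T" and full: "card T = k"
    and "1 \<le> ks" and "ks \<le> k"
  obtains d where "0 \<le> d" and "card {j\<in>T. d < c j} < k"
    and "real ks * d \<le> (\<Sum>j\<in>T. c j) - (\<Sum>j\<in>{j\<in>T. d < c j}. c j - d)"
    and "rbmc_update k ks (T, c) (i, \<Delta>) =
      (if d \<le> \<Delta> then (insert i {j\<in>T. d < c j}, (\<lambda>j. c j - d)(i := \<Delta> - d))
       else ({j\<in>T. d < c j}, \<lambda>j. c j - d))"
proof
  define d where "d = kth_largest T c ks"
  have fin: "finite T" and nonneg: "\<forall>j\<in>T. 0 \<le> c j" using wf by (auto simp: wf_summary_def)
  have ksT: "ks \<le> card T" using full assms(5) by simp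
  obtain t where t: "t \<in> T" "c t = d" using kth_largest_in_image[OF fin assms(4) ksT] d_def by metis
  show "0 \<le> d" using t nonneg by auto
  have "{j\<in>T. d < c j} \<subset> T" using t by auto
  then show "card {j\<in>T. d < c j} < k" using psubset_card_mono[OF fin] full by blast
  show "real ks * d \<le> (\<Sum>j\<in>T. c j) - (\<Sum>j\<in>{j\<in>T. d < c j}. c j - d)"
    using sum_truncation_ge[OF fin nonneg \<open>0 \<le> d\<close>] kth_largest_card_ge[OF fin assms(4) ksT] d_def
    by blast
  show "rbmc_update k ks (T, c) (i, \<Delta>) =
      (if d \<le> \<Delta> then (insert i {j\<in>T. d < c j}, (\<lambda>j. c j - d)(i := \<Delta> - d))
       else ({j\<in>T. d < c j}, \<lambda>j. c j - d))"
    using assms(2) full by (simp add: rbmc_update_def decrement_counters_def d_def Let_def)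
qed

lemma rbmc_update_wf:
  assumes "wf_summary k S" and "1 \<le> ks" and "ks \<le> k" and "0 \<le> \<Delta>"
  shows "wf_summary k (rbmc_update k ks S (i, \<Delta>))"
proof -
  obtain T c where S: "S = (T, c)" by fastforce
  have fin: "finite T" and "card T \<le> k" using assms(1) by (auto simp: S wf_summary_def)
  consider (present) "i \<in> T" | (room) "i \<notin> T" "card T < k" | (full) "i \<notin> T" "card T = k"
    using \<open>card T \<le> k\<close> by linarith
  then show ?thesis
  proof cases
    case full
    obtain d where "0 \<le> d" "card {j\<in>T. d < c j} < k"
      and upd: "rbmc_update k ks (T, c) (i, \<Delta>) =
        (if d \<le> \<Delta> then (insert i {j\<in>T. d < c j}, (\<lambda>j. c j - d)(i := \<Delta> - d))
         else ({j\<in>T. d < c j}, \<lambda>j. c j - d))"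
      by (rule rbmc_update_decrement[OF assms(1)[unfolded S] full assms(2,3)])
    have "finite {j\<in>T. d < c j}" using fin by simp
    with \<open>0 \<le> d\<close> \<open>card {j\<in>T. d < c j} < k\<close> show ?thesis
      by (simp add: S upd wf_summary_def card_insert_if)
  next
    case present
    then show ?thesis using assms(1) by (simp add: S rbmc_update_def wf_summary_def assms(4))
  next
    case room
    then show ?thesis using assms(1) by (simp add: S rbmc_update_def wf_summary_def assms(4))
  qed
qed

lemma freq_Nil [simp]: "freq [] x = 0"
  by (simp add: freq_def)

lemma freq_Cons [simp]: "freq ((i, \<Delta>) # \<sigma>) x = (if i = x then \<Delta> else 0) + freq \<sigma> x"
  by (simp add: freq_def)

lemma freq_append: "freq (\<sigma> @ \<tau>) x = freq \<sigma> x + freq \<tau> x"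
  by (simp add: freq_def)

lemma weighted_length_Nil [simp]: "weighted_length [] = 0"
  by (simp add: weighted_length_def)

lemma weighted_length_Cons [simp]: "weighted_length ((i, \<Delta>) # \<sigma>) = \<Delta> + weighted_length \<sigma>"
  by (simp add: weighted_length_def)

lemma weighted_length_append: "weighted_length (\<sigma> @ \<tau>) = weighted_length \<sigma> + weighted_length \<tau>"
  by (simp add: weighted_length_def)

text \<open>\<open>D\<close> bounds the total size of the decrements performed while processing \<open>\<sigma>\<close> from \<open>S\<close>.\<close>
definition error_bounded :: "nat \<Rightarrow> summary \<Rightarrow> wstream \<Rightarrow> summary \<Rightarrow> real \<Rightarrow> bool" where
  "error_bounded ks S \<sigma> S' D \<longleftrightarrow> 0 \<le> D \<and>
     real ks * D \<le> weighted_length \<sigma> + counter_sum S - counter_sum S' \<and>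
     (\<forall>x. rbmc_estimate S x + freq \<sigma> x - D \<le> rbmc_estimate S' x \<and>
          rbmc_estimate S' x \<le> rbmc_estimate S x + freq \<sigma> x)"

lemma rbmc_update_error_bounded:
  assumes "wf_summary k S" and "1 \<le> ks" and "ks \<le> k" and "0 \<le> \<Delta>"
  shows "\<exists>D. error_bounded ks S [(i, \<Delta>)] (rbmc_update k ks S (i, \<Delta>)) D"
proof -
  obtain T c where S: "S = (T, c)" by fastforce
  have fin: "finite T" and "card T \<le> k" and nonneg: "\<forall>j\<in>T. 0 \<le> c j"
    using assms(1) by (auto simp: S wf_summary_def)
  consider (present) "i \<in> T" | (room) "i \<notin> T" "card T < k" | (full) "i \<notin> T" "card T = k"
    using \<open>card T \<le> k\<close> by linarith
  then show ?thesis
  proof cases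
    case present
    have "counter_sum (T, c(i := c i + \<Delta>)) = counter_sum (T, c) + \<Delta>"
      using present fin by (simp add: counter_sum_def sum.remove)
    with present have "error_bounded ks S [(i, \<Delta>)] (rbmc_update k ks S (i, \<Delta>)) 0"
      by (auto simp: S rbmc_update_def error_bounded_def rbmc_estimate_def)
    then show ?thesis ..
  next
    case room
    have "(\<Sum>j\<in>T. (c(i := \<Delta>)) j) = (\<Sum>j\<in>T. c j)"
      using room by (intro sum.cong) auto
    then have "counter_sum (insert i T, c(i := \<Delta>)) = counter_sum (T, c) + \<Delta>"
      using room fin by (simp add: counter_sum_def)
    with room have "error_bounded ks S [(i, \<Delta>)] (rbmc_update k ks S (i, \<Delta>)) 0"
      by (auto simp: S rbmc_update_def error_bounded_def rbmc_estimate_def)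
    then show ?thesis ..
  next
    case full
    obtain d where "0 \<le> d"
      and mass: "real ks * d \<le> (\<Sum>j\<in>T. c j) - (\<Sum>j\<in>{j\<in>T. d < c j}. c j - d)"
      and upd: "rbmc_update k ks (T, c) (i, \<Delta>) =
        (if d \<le> \<Delta> then (insert i {j\<in>T. d < c j}, (\<lambda>j. c j - d)(i := \<Delta> - d))
         else ({j\<in>T. d < c j}, \<lambda>j. c j - d))"
      by (rule rbmc_update_decrement[OF assms(1)[unfolded S] full assms(2,3)])
    have "(\<Sum>j\<in>{j\<in>T. d < c j}. ((\<lambda>j. c j - d)(i := \<Delta> - d)) j) = (\<Sum>j\<in>{j\<in>T. d < c j}. c j - d)"
      using full by (intro sum.cong) auto
    then have "counter_sum (rbmc_update k ks S (i, \<Delta>)) =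
        (\<Sum>j\<in>{j\<in>T. d < c j}. c j - d) + (if d \<le> \<Delta> then \<Delta> - d else 0)"
      using full fin by (simp add: S upd counter_sum_def)
    with full \<open>0 \<le> d\<close> mass nonneg assms(4)
    have "error_bounded ks S [(i, \<Delta>)] (rbmc_update k ks S (i, \<Delta>)) d"
      by (auto simp: S upd error_bounded_def rbmc_estimate_def counter_sum_def)
    then show ?thesis ..
  qed
qed

lemma error_bounded_Nil: "error_bounded ks S [] S 0"
  by (simp add: error_bounded_def)

lemma error_bounded_append:
  assumes "error_bounded ks S \<sigma> S' D" and "error_bounded ks S' \<tau> S'' D'"
  shows "error_bounded ks S (\<sigma> @ \<tau>) S'' (D + D')"
proof -
  have "rbmc_estimate S x + freq (\<sigma> @ \<tau>) x - (D + D') \<le> rbmc_estimate S'' x \<and>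
        rbmc_estimate S'' x \<le> rbmc_estimate S x + freq (\<sigma> @ \<tau>) x" for x
    using assms unfolding error_bounded_def freq_append
    by (smt (verit, best))
  with assms show ?thesis
    by (simp add: error_bounded_def weighted_length_append distrib_left)
qed

lemma foldl_rbmc_update_wf:
  assumes "wf_summary k S" and "1 \<le> ks" and "ks \<le> k" and "\<forall>(i, \<Delta>)\<in>set \<sigma>. 0 \<le> \<Delta>"
  shows "wf_summary k (foldl (rbmc_update k ks) S \<sigma>)"
  using assms(1,4)
proof (induction \<sigma> arbitrary: S)
  case (Cons u \<sigma>)
  obtain i \<Delta> where u: "u = (i, \<Delta>)" by fastforce
  have "wf_summary k (rbmc_update k ks S (i, \<Delta>))"
    using Cons.prems u by (intro rbmc_update_wf[OF _ assms(2,3)]) auto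
  then show ?case using Cons.IH Cons.prems(2) by (simp add: u)
qed simp

lemma foldl_rbmc_update_error_bounded:
  assumes "wf_summary k S" and "1 \<le> ks" and "ks \<le> k" and "\<forall>(i, \<Delta>)\<in>set \<sigma>. 0 \<le> \<Delta>"
  shows "\<exists>D. error_bounded ks S \<sigma> (foldl (rbmc_update k ks) S \<sigma>) D"
  using assms(1,4)
proof (induction \<sigma> arbitrary: S)
  case Nil
  show ?case using error_bounded_Nil by fastforce
next
  case (Cons u \<sigma>)
  obtain i \<Delta> where u: "u = (i, \<Delta>)" by fastforce
  define S' where "S' = rbmc_update k ks S (i, \<Delta>)"
  have "0 \<le> \<Delta>" using Cons.prems(2) u by auto
  obtain d where d: "error_bounded ks S [(i, \<Delta>)] S' d"
    using rbmc_update_error_bounded[OF Cons.prems(1) assms(2,3) \<open>0 \<le> \<Delta>\<close>] S'_def by blast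
  have "wf_summary k S'"
    using rbmc_update_wf[OF Cons.prems(1) assms(2,3) \<open>0 \<le> \<Delta>\<close>] S'_def by blast
  moreover have "\<forall>(i, \<Delta>)\<in>set \<sigma>. 0 \<le> \<Delta>" using Cons.prems(2) by simp
  ultimately obtain D where "error_bounded ks S' \<sigma> (foldl (rbmc_update k ks) S' \<sigma>) D"
    using Cons.IH by blast
  with d have "error_bounded ks S ([(i, \<Delta>)] @ \<sigma>) (foldl (rbmc_update k ks) S' \<sigma>) (d + D)"
    by (rule error_bounded_append)
  then show ?case by (auto simp: u S'_def)
qed

lemma rbmc_estimate_empty [simp]: "rbmc_estimate empty_summary x = 0"
  by (simp add: rbmc_estimate_def empty_summary_def)

lemma counter_sum_empty [simp]: "counter_sum empty_summary = 0"
  by (simp add: counter_sum_def empty_summary_def)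

lemma wf_summary_empty: "wf_summary k empty_summary"
  by (simp add: wf_summary_def empty_summary_def)

lemma error_bounded_empty_iff:
  "error_bounded ks empty_summary \<sigma> S D \<longleftrightarrow> 0 \<le> D \<and>
     real ks * D \<le> weighted_length \<sigma> - counter_sum S \<and>
     (\<forall>x. freq \<sigma> x - D \<le> rbmc_estimate S x \<and> rbmc_estimate S x \<le> freq \<sigma> x)"
  by (simp add: error_bounded_def)

lemma freq_counter_stream:
  assumes "distinct xs"
  shows "freq (map (\<lambda>i. (i, g i)) xs) x = (if x \<in> set xs then g x else 0)"
  using assms by (induction xs) auto

lemma weighted_length_counter_stream:
  assumes "distinct xs"
  shows "weighted_length (map (\<lambda>i. (i, g i)) xs) = (\<Sum>i\<in>set xs. g i)"
  using assms by (induction xs) auto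

text \<open>The counters of \<open>S2\<close> underestimate the frequencies in \<open>\<sigma>\<close> by at most \<open>D2\<close> and fall
short of its length by at least \<open>ks * D2\<close>, so feeding them to \<open>S1\<close> in place of \<open>\<sigma>\<close> costs
at most \<open>D2\<close> more.\<close>
lemma error_bounded_replay:
  assumes "error_bounded ks empty_summary \<sigma> S2 D2" and "error_bounded ks S1 \<mu> S D3"
    and "\<And>x. freq \<mu> x = rbmc_estimate S2 x" and "weighted_length \<mu> = counter_sum S2"
  shows "error_bounded ks S1 \<sigma> S (D2 + D3)"
proof -
  have "rbmc_estimate S1 x + freq \<sigma> x - (D2 + D3) \<le> rbmc_estimate S x \<and>
        rbmc_estimate S x \<le> rbmc_estimate S1 x + freq \<sigma> x" for x
    using assms(1,2) assms(3)[of x] unfolding error_bounded_def by (smt (verit, best) rbmc_estimate_empty)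
  with assms show ?thesis by (simp add: error_bounded_def distrib_left)
qed

lemma valid_stream_nonneg: "valid_stream m \<sigma> \<Longrightarrow> \<forall>(i, \<Delta>)\<in>set \<sigma>. 0 \<le> \<Delta>"
  by (fastforce simp: valid_stream_def)

lemma rbmc_merge_error_bounded:
  assumes "1 \<le> ks" and "ks \<le> k"
    and "\<forall>(i, \<Delta>)\<in>set \<sigma>1. 0 \<le> \<Delta>" and "\<forall>(i, \<Delta>)\<in>set \<sigma>2. 0 \<le> \<Delta>"
    and "distinct xs" and "set xs = fst (rbmc_run k ks empty_summary \<sigma>2)"
  defines "S \<equiv> rbmc_merge k ks (rbmc_run k ks empty_summary \<sigma>1) (rbmc_run k ks empty_summary \<sigma>2) xs"
  obtains D where "wf_summary k S" and "error_bounded ks empty_summary (\<sigma>1 @ \<sigma>2) S D"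
proof -
  define S1 where "S1 = rbmc_run k ks empty_summary \<sigma>1"
  define S2 where "S2 = rbmc_run k ks empty_summary \<sigma>2"
  define \<mu> where "\<mu> = map (\<lambda>i. (i, snd S2 i)) xs"
  note run_wf = foldl_rbmc_update_wf[OF wf_summary_empty assms(1,2)]
  note run_bounded = foldl_rbmc_update_error_bounded[OF wf_summary_empty assms(1,2)]
  have wf1: "wf_summary k S1" and wf2: "wf_summary k S2"
    using run_wf assms(3,4) by (simp_all add: S1_def S2_def rbmc_run_def)
  obtain D1 where D1: "error_bounded ks empty_summary \<sigma>1 S1 D1"
    using run_bounded assms(3) by (auto simp: S1_def rbmc_run_def)
  obtain D2 where D2: "error_bounded ks empty_summary \<sigma>2 S2 D2"
    using run_bounded assms(4) by (auto simp: S2_def rbmc_run_def)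
  have xs: "set xs = fst S2" using assms(6) by (simp add: S2_def)
  have freq_\<mu>: "freq \<mu> x = rbmc_estimate S2 x" for x
    using freq_counter_stream[OF assms(5)] xs by (simp add: \<mu>_def rbmc_estimate_def)
  have length_\<mu>: "weighted_length \<mu> = counter_sum S2"
    using weighted_length_counter_stream[OF assms(5)] xs by (simp add: \<mu>_def counter_sum_def)
  have nonneg_\<mu>: "\<forall>(i, \<Delta>)\<in>set \<mu>. 0 \<le> \<Delta>"
    using wf2 xs by (auto simp: \<mu>_def wf_summary_def)
  have S: "S = foldl (rbmc_update k ks) S1 \<mu>"
    by (simp add: S_def S1_def S2_def rbmc_merge_def \<mu>_def)
  obtain D3 where "error_bounded ks S1 \<mu> S D3"
    using foldl_rbmc_update_error_bounded[OF wf1 assms(1,2) nonneg_\<mu>] S by blast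
  with D2 freq_\<mu> length_\<mu> have "error_bounded ks S1 \<sigma>2 S (D2 + D3)"
    by (intro error_bounded_replay)
  with D1 have "error_bounded ks empty_summary (\<sigma>1 @ \<sigma>2) S (D1 + (D2 + D3))"
    by (rule error_bounded_append)
  moreover have "wf_summary k S"
    using foldl_rbmc_update_wf[OF wf1 assms(1,2) nonneg_\<mu>] S by simp
  ultimately show ?thesis using that by blast
qed

lemma sum_estimates_le_counter_sum:
  assumes "wf_summary k S" and "finite A"
  shows "(\<Sum>x\<in>A. rbmc_estimate S x) \<le> counter_sum S"
proof -
  obtain T c where S: "S = (T, c)" by fastforce
  have fin: "finite T" and nonneg: "\<forall>j\<in>T. 0 \<le> c j" using assms(1) by (auto simp: S wf_summary_def)
  have "(\<Sum>x\<in>A. rbmc_estimate S x) = (\<Sum>x\<in>A \<inter> T. c x)"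
    unfolding S rbmc_estimate_def fst_conv snd_conv using assms(2) by (simp add: sum.inter_restrict)
  also have "\<dots> \<le> (\<Sum>x\<in>T. c x)" using fin nonneg by (intro sum_mono2) auto
  finally show ?thesis by (simp add: S counter_sum_def)
qed

lemma sum_freq_eq_weighted_length:
  assumes "valid_stream m \<sigma>"
  shows "(\<Sum>x\<in>{1..m}. freq \<sigma> x) = weighted_length \<sigma>"
  using assms by (induction \<sigma>) (auto simp: valid_stream_def sum.distrib)

lemma sum_take_le_threshold:
  fixes xs :: "real list"
  assumes "0 \<le> D"
  shows "sum_list (take j xs) \<le> real j * D + sum_list (map (\<lambda>x. max 0 (x - D)) xs)"
proof -
  define h where "h = (\<lambda>x::real. max 0 (x - D))"
  have "sum_list (take j xs) \<le> sum_list (map (\<lambda>x. D + h x) (take j xs))"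
    using sum_list_mono[of "take j xs" "\<lambda>x. x" "\<lambda>x. D + h x"] by (simp add: h_def)
  also have "\<dots> = real (length (take j xs)) * D + sum_list (map h (take j xs))"
    by (simp add: sum_list_addf sum_list_triv)
  also have "\<dots> \<le> real j * D + sum_list (map h (take j xs))"
    using assms by (intro add_right_mono mult_right_mono) auto
  also have "sum_list (map h (take j xs)) \<le> sum_list (map h xs)"
  proof -
    have "sum_list (map h xs) = sum_list (map h (take j xs)) + sum_list (map h (drop j xs))"
      by (metis append_take_drop_id map_append sum_list_append)
    moreover have "0 \<le> sum_list (map h (drop j xs))" by (rule sum_list_nonneg) (auto simp: h_def)
    ultimately show ?thesis by simp
  qed
  finally show ?thesis by (simp add: h_def)
qed

lemma sum_list_map_upt_eq_sum:
  "sum_list (map f [1..<m+1]) = (\<Sum>x\<in>{1..m}. f x)"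
proof -
  have "set [1..<m+1] = {1..m}" by auto
  then show ?thesis by (metis distinct_upt sum_list_distinct_conv_sum_set)
qed

lemma sum_list_map_rev_sort:
  fixes f :: "'a::linorder \<Rightarrow> 'b::comm_monoid_add"
  shows "sum_list (map f (rev (sort xs))) = sum_list (map f xs)"
proof -
  have "mset (map f (rev (sort xs))) = mset (map f xs)" by simp
  then show ?thesis by (metis sum_mset_sum_list)
qed

lemma N_res_eq:
  "N_res m \<sigma> j = (\<Sum>x\<in>{1..m}. freq \<sigma> x) - sum_list (take j (rev (sort (map (freq \<sigma>) [1..<m+1]))))"
proof -
  define L where "L = map (freq \<sigma>) [1..<m+1]"
  have "sum_list (take j (rev (sort L))) + sum_list (drop j (rev (sort L))) = sum_list L"
    using sum_list_map_rev_sort[of id L] by (metis append_take_drop_id list.map_id sum_list_append)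
  moreover have "sum_list L = (\<Sum>x\<in>{1..m}. freq \<sigma> x)"
    unfolding L_def by (rule sum_list_map_upt_eq_sum)
  ultimately show ?thesis by (simp add: N_res_def L_def)
qed

lemma error_bounded_le_N_res:
  assumes "wf_summary k S" and "valid_stream m \<sigma>"
    and "error_bounded ks empty_summary \<sigma> S D" and "j < ks"
  shows "D \<le> N_res m \<sigma> j / (real ks - real j)"
proof -
  define L where "L = rev (sort (map (freq \<sigma>) [1..<m+1]))"
  have D: "0 \<le> D" "real ks * D \<le> weighted_length \<sigma> - counter_sum S"
    and lower: "\<And>x. freq \<sigma> x - D \<le> rbmc_estimate S x"
    using assms(3) by (auto simp: error_bounded_empty_iff)
  have nonneg_est: "0 \<le> rbmc_estimate S x" for x
    using assms(1) by (auto simp: rbmc_estimate_def wf_summary_def)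
  have "sum_list (take j L) \<le> real j * D + sum_list (map (\<lambda>x. max 0 (x - D)) L)"
    by (rule sum_take_le_threshold[OF D(1)])
  also have "sum_list (map (\<lambda>x. max 0 (x - D)) L) = (\<Sum>x\<in>{1..m}. max 0 (freq \<sigma> x - D))"
    unfolding L_def sum_list_map_rev_sort map_map comp_def by (rule sum_list_map_upt_eq_sum)
  also have "\<dots> \<le> (\<Sum>x\<in>{1..m}. rbmc_estimate S x)"
    using lower nonneg_est by (intro sum_mono) auto
  also have "\<dots> \<le> counter_sum S" by (rule sum_estimates_le_counter_sum[OF assms(1)]) simp
  finally have "(real ks - real j) * D \<le> N_res m \<sigma> j"
    using D(2) N_res_eq[of m \<sigma> j] sum_freq_eq_weighted_length[OF assms(2)]
    by (simp add: L_def left_diff_distrib)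
  then show ?thesis using assms(4) by (simp add: field_simps)
qed

theorem theorem9:
  fixes k ks m :: nat and \<sigma>1 \<sigma>2 :: wstream and xs :: "nat list"
  assumes "1 \<le> k" and "1 \<le> ks" and "ks \<le> k"
    and "valid_stream m \<sigma>1" and "valid_stream m \<sigma>2"
    and "distinct xs" and "set xs = fst (rbmc_run k ks empty_summary \<sigma>2)"
  shows "let S1 = rbmc_run k ks empty_summary \<sigma>1; S2 = rbmc_run k ks empty_summary \<sigma>2;
             S = rbmc_merge k ks S1 S2 xs; \<sigma> = \<sigma>1 @ \<sigma>2;
             N = weighted_length \<sigma>1 + weighted_length \<sigma>2; C = counter_sum S in
         \<forall>i \<in> {1..m}.
           0 \<le> freq \<sigma> i - rbmc_estimate S i \<and>
           freq \<sigma> i - rbmc_estimate S i \<le> (N - C) / real ks \<and>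
           (\<forall>j < ks. freq \<sigma> i - rbmc_estimate S i \<le> N_res m \<sigma> j / (real ks - real j))"
proof -
  define S where "S = rbmc_merge k ks (rbmc_run k ks empty_summary \<sigma>1) (rbmc_run k ks empty_summary \<sigma>2) xs"
  obtain D where wf: "wf_summary k S" and bounded: "error_bounded ks empty_summary (\<sigma>1 @ \<sigma>2) S D"
    using rbmc_merge_error_bounded[OF assms(2,3) valid_stream_nonneg valid_stream_nonneg assms(6,7)]
      assms(4,5) S_def by metis
  have valid: "valid_stream m (\<sigma>1 @ \<sigma>2)" using assms(4,5) by (auto simp: valid_stream_def)
  have "real ks * D \<le> weighted_length \<sigma>1 + weighted_length \<sigma>2 - counter_sum S"
    and error: "\<And>i. 0 \<le> freq (\<sigma>1 @ \<sigma>2) i - rbmc_estimate S i \<and>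
      freq (\<sigma>1 @ \<sigma>2) i - rbmc_estimate S i \<le> D"
    using bounded unfolding error_bounded_empty_iff weighted_length_append
    by (smt (verit))+
  then have "D \<le> (weighted_length \<sigma>1 + weighted_length \<sigma>2 - counter_sum S) / real ks"
    using assms(2) by (simp add: pos_le_divide_eq mult.commute)
  then show ?thesis
    using error error_bounded_le_N_res[OF wf valid bounded] unfolding Let_def S_def[symmetric]
    by (meson order_trans)
qed

end
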